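(* For all $x,y\in\mathcal A$, the power series $\mathcal S(x,y;\lambda)=\sum_{n\ge0}P_x(W_n=y)\lambda^n$ and $\mathcal R(x,y;\lambda)=\sum_{n\ge0}P_x(\tau_y=n)\lambda^n$ have radii of convergence strictly greater than $1$.
   Context: Fix an integer $N\ge 3$. Let $\mathcal G_N$ be the groupoid with object set $\{1,\dots,N\}$ generated by arrows $A_{i,j}^{(k)}$, $i\neq j\in\{1,\dots,N\}$, $k\in\{-1,1\}$, with source $i$ and target $j$, subject to the relations $A_{i,j}^{(k)}A_{j,\ell}^{(k)}=A_{i,\ell}^{(k)}$ for all $i,j,\ell$, $k$, with the convention $A_{i,i}^{(k)}:=e_i$ (unit at object $i$). Let $\mathcal A$ be its arrow set. Let $\{W_n\}_{n\ge0}$ be the Markov chain on $\mathcal A$ with $P(W_{n+1}=y\mid W_n=x)=p_{i,j}^{(k)}$ if $x^{-1}y=A_{i,j}^{(k)}$ with $i\ne j$ and $0$ otherwise, where $p_{i,j}^{(k)}\in(0,1)$ and $\sum_{j\ne i}\sum_{k=\pm1}p_{i,j}^{(k)}=1$ for each $i$; $P_x$ denotes the law with $W_0=x$. For $y\in\mathcal A$, $\tau_y=\inf\{n\ge0: W_n=y\}$ is the first hitting time of $y$ (possibly $\infty$). (A power series that is identically zero is regarded as having infinite radius of convergence.) *)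

theory Defs
  imports "HOL-Probability.Probability"
begin

text \<open>Concrete model of the groupoid G_N by reduced (normal-form) words.
  G_N is the free product (over the object set) of two copies (labels k = 1, k = -1)
  of the pair groupoid on {1..N}.  An arrow is represented as (s, ws) where s is its source
  and ws = [(k_1,i_1),...,(k_m,i_m)] is the reduced word
  A_{s,i_1}^{(k_1)} A_{i_1,i_2}^{(k_2)} ... A_{i_{m-1},i_m}^{(k_m)}
  with consecutive objects distinct and consecutive labels distinct (alternating).\<close>

type_synonym arrow = "nat \<times> (int \<times> nat) list"

definition src :: "arrow \<Rightarrow> nat" where
  "src x = fst x"

definition tgt :: "arrow \<Rightarrow> nat" where
  "tgt x = (if snd x = [] then fst x else snd (last (snd x)))"

definition arrows :: "nat \<Rightarrow> arrow set" where
  "arrows N = {(s, ws). s \<in> {1..N}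
      \<and> (\<forall>(k, j) \<in> set ws. j \<in> {1..N} \<and> k \<in> {-1, 1})
      \<and> (\<forall>m < length ws. snd (ws ! m) \<noteq> (if m = 0 then s else snd (ws ! (m - 1))))
      \<and> (\<forall>m. Suc m < length ws \<longrightarrow> fst (ws ! m) \<noteq> fst (ws ! Suc m))}"

definition unit_arr :: "nat \<Rightarrow> arrow" where
  "unit_arr i = (i, [])"

definition gen :: "nat \<Rightarrow> nat \<Rightarrow> int \<Rightarrow> arrow" where
  "gen i j k = (if i = j then (i, []) else (i, [(k, j)]))"

text \<open>Right multiplication of a reduced word by one letter (k,j), using the relation
  A_{i,j}^{(k)} A_{j,l}^{(k)} = A_{i,l}^{(k)} (with A_{i,i}^{(k)} = e_i) to reduce.\<close>
definition push :: "arrow \<Rightarrow> int \<times> nat \<Rightarrow> arrow" where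
  "push x l = (let (s, ws) = x; (k, j) = l in
     if ws \<noteq> [] \<and> fst (last ws) = k then
       (if tgt (s, butlast ws) = j then (s, butlast ws) else (s, butlast ws @ [(k, j)]))
     else (s, ws @ [(k, j)]))"

text \<open>Groupoid composition x y (x first, then y; defined when tgt x = src y).\<close>
definition mult :: "arrow \<Rightarrow> arrow \<Rightarrow> arrow" where
  "mult x y = foldl push x (snd y)"

text \<open>One-step transition law: from x, move to x A_{tgt x, j}^{(k)} with probability
  p (tgt x) j k, i.e. P(W_{n+1} = y | W_n = x) = p_{i,j}^{(k)} iff x^{-1} y = A_{i,j}^{(k)}.\<close>
definition trans_prob :: "nat \<Rightarrow> (nat \<Rightarrow> nat \<Rightarrow> int \<Rightarrow> real) \<Rightarrow> arrow \<Rightarrow> arrow \<Rightarrow> real" where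
  "trans_prob N p x y =
     (\<Sum>j\<in>{1..N} - {tgt x}. \<Sum>k\<in>{-1, 1::int}.
        p (tgt x) j k * (if y = mult x (gen (tgt x) j k) then 1 else 0))"

definition kernel :: "nat \<Rightarrow> (nat \<Rightarrow> nat \<Rightarrow> int \<Rightarrow> real) \<Rightarrow> arrow \<Rightarrow> arrow pmf" where
  "kernel N p x = embed_pmf (trans_prob N p x)"

fun path_pmf :: "nat \<Rightarrow> (nat \<Rightarrow> nat \<Rightarrow> int \<Rightarrow> real) \<Rightarrow> arrow \<Rightarrow> nat \<Rightarrow> arrow list pmf" where
  "path_pmf N p x 0 = return_pmf [x]"
| "path_pmf N p x (Suc n) =
     bind_pmf (path_pmf N p x n) (\<lambda>w. map_pmf (\<lambda>z. w @ [z]) (kernel N p (last w)))"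

definition prob_at :: "nat \<Rightarrow> (nat \<Rightarrow> nat \<Rightarrow> int \<Rightarrow> real) \<Rightarrow> arrow \<Rightarrow> arrow \<Rightarrow> nat \<Rightarrow> real" where
  "prob_at N p x y n = measure_pmf.prob (path_pmf N p x n) {w. w ! n = y}"

definition prob_hit :: "nat \<Rightarrow> (nat \<Rightarrow> nat \<Rightarrow> int \<Rightarrow> real) \<Rightarrow> arrow \<Rightarrow> arrow \<Rightarrow> nat \<Rightarrow> real" where
  "prob_hit N p x y n =
     measure_pmf.prob (path_pmf N p x n) {w. w ! n = y \<and> (\<forall>m < n. w ! m \<noteq> y)}"

end

theory Submission
  imports Defs
begin

text \<open>
  Let u_n(z) = P_x(W_n = z) and let \<delta> > 0 bound all p_{i,j}^(k) from below. The targets of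
  W_n form a Markov chain on the objects with matrix Q(t,j) = \<Sum>_k p_{t,j}^(k); its weights
  \<omega>_n = 1 Q^n stay between \<delta>^2 and N, and \<Sum>_z \<omega>_n(tgt z) T(z,y) \<le> \<omega>_{n+1}(tgt y) because
  an arrow has at most one predecessor for each object and label.
  Cauchy--Schwarz applied to u_{n+1}(y) = \<Sum>_z u_n(z) T(z,y) with the weights \<omega>_n(tgt z) T(z,y)
  shows that the energy E_n = \<Sum>_z u_n(z)^2 / \<omega>_n(tgt z) drops in each step by a multiple of
  the Dirichlet form of h = u_n / \<omega>_n(tgt _) along the triangles v, v A_{t,j}^(k), v A_{t,j'}^(k)
  (the last two differ by A_{j,j'}^(k)). Two such extension maps are injective with disjoint
  images, so the Dirichlet form dominates a fixed fraction of \<Sum> h^2. Hence E_n decays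
  geometrically, and with it u_n(y)^2 \<le> N E_n and P_x(\<tau>_y = n) \<le> u_n(y).
\<close>

section \<open>Reduced words\<close>

lemma tgt_Nil [simp]: "tgt (s, []) = s"
  and tgt_snoc [simp]: "tgt (s, ws @ [l]) = snd l"
  by (auto simp: tgt_def)

lemma Nil_in_arrows_iff [simp]: "(s, []) \<in> arrows N \<longleftrightarrow> s \<in> {1..N}"
  by (auto simp: arrows_def)

lemma snoc_in_arrows_iff:
  "(s, ws @ [(k, j)]) \<in> arrows N \<longleftrightarrow> (s, ws) \<in> arrows N \<and> j \<in> {1..N} \<and> k \<in> {-1, 1}
     \<and> j \<noteq> tgt (s, ws) \<and> (ws \<noteq> [] \<longrightarrow> fst (last ws) \<noteq> k)"
proof -
  have objects_iff:
    "(\<forall>m < length (ws @ [(k, j)]). snd ((ws @ [(k, j)]) ! m)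
        \<noteq> (if m = 0 then s else snd ((ws @ [(k, j)]) ! (m - 1))))
     \<longleftrightarrow> (\<forall>m < length ws. snd (ws ! m) \<noteq> (if m = 0 then s else snd (ws ! (m - 1))))
        \<and> j \<noteq> tgt (s, ws)"
  proof -
    have "(\<forall>m < length (ws @ [(k, j)]). P m) \<longleftrightarrow> (\<forall>m < length ws. P m) \<and> P (length ws)" for P
      by (auto simp: less_Suc_eq)
    moreover have "snd ((ws @ [(k, j)]) ! length ws)
        \<noteq> (if length ws = 0 then s else snd ((ws @ [(k, j)]) ! (length ws - 1)))
        \<longleftrightarrow> j \<noteq> tgt (s, ws)"
      by (cases ws rule: rev_cases) (auto simp: tgt_def nth_append)
    moreover have "m < length ws \<Longrightarrow> snd ((ws @ [(k, j)]) ! m)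
        \<noteq> (if m = 0 then s else snd ((ws @ [(k, j)]) ! (m - 1)))
        \<longleftrightarrow> snd (ws ! m) \<noteq> (if m = 0 then s else snd (ws ! (m - 1)))" for m
      by (auto simp: nth_append)
    ultimately show ?thesis by (simp only:) (auto simp: nth_append)
  qed
  have labels_iff:
    "(\<forall>m. Suc m < length (ws @ [(k, j)]) \<longrightarrow> fst ((ws @ [(k, j)]) ! m) \<noteq> fst ((ws @ [(k, j)]) ! Suc m))
     \<longleftrightarrow> (\<forall>m. Suc m < length ws \<longrightarrow> fst (ws ! m) \<noteq> fst (ws ! Suc m))
        \<and> (ws \<noteq> [] \<longrightarrow> fst (last ws) \<noteq> k)"
  proof -
    have "(\<forall>m. Suc m < length (ws @ [(k, j)]) \<longrightarrow> P m)
        \<longleftrightarrow> (\<forall>m. Suc m < length ws \<longrightarrow> P m) \<and> (ws \<noteq> [] \<longrightarrow> P (length ws - 1))" for P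
      by (cases ws rule: rev_cases) (auto simp: less_Suc_eq)
    moreover have "ws \<noteq> [] \<Longrightarrow> fst ((ws @ [(k, j)]) ! (length ws - 1))
        \<noteq> fst ((ws @ [(k, j)]) ! Suc (length ws - 1)) \<longleftrightarrow> fst (last ws) \<noteq> k"
      by (cases ws rule: rev_cases) (auto simp: nth_append)
    moreover have "Suc m < length ws \<Longrightarrow> fst ((ws @ [(k, j)]) ! m) \<noteq> fst ((ws @ [(k, j)]) ! Suc m)
        \<longleftrightarrow> fst (ws ! m) \<noteq> fst (ws ! Suc m)" for m
      by (auto simp: nth_append)
    ultimately show ?thesis by (simp only:) (auto simp: nth_append)
  qed
  show ?thesis unfolding arrows_def using objects_iff labels_iff by auto
qed

lemma arrows_snoc_cases:
  assumes "(s, ws) \<in> arrows N"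
  obtains (empty) "ws = []" "s \<in> {1..N}"
  | (snoc) bw k0 t0 where "ws = bw @ [(k0, t0)]" "(s, bw) \<in> arrows N" "t0 \<in> {1..N}" "k0 \<in> {-1, 1}"
     "t0 \<noteq> tgt (s, bw)" "bw \<noteq> [] \<Longrightarrow> fst (last bw) \<noteq> k0"
proof (cases ws rule: rev_cases)
  case Nil
  then show ?thesis using assms that by auto
next
  case (snoc bw l)
  then show ?thesis
    using assms that(2)[of bw "fst l" "snd l"] by (cases l) (auto simp: snoc_in_arrows_iff)
qed

lemma tgt_in_arrows:
  assumes "x \<in> arrows N"
  shows "tgt x \<in> {1..N}"
proof -
  obtain s ws where x_eq: "x = (s, ws)" by (cases x)
  show ?thesis using assms unfolding x_eq by (cases rule: arrows_snoc_cases) auto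
qed

lemma push_Nil: "push (s, []) (k, j) = (s, [(k, j)])"
  by (simp add: push_def)

lemma push_snoc:
  "push (s, bw @ [(k0, t0)]) (k, j) =
    (if k0 = k then (if tgt (s, bw) = j then (s, bw) else (s, bw @ [(k, j)]))
     else (s, bw @ [(k0, t0), (k, j)]))"
  by (simp add: push_def)

lemma tgt_push [simp]: "tgt (push x (k, j)) = j"
  by (cases x) (auto simp: push_def tgt_def)

lemma length_push_le: "length (snd (push x l)) \<le> Suc (length (snd x))"
  by (cases x; cases l) (auto simp: push_def)

lemma push_in_arrows:
  assumes x: "x \<in> arrows N" and j: "j \<in> {1..N}" "j \<noteq> tgt x" and k: "k \<in> {-1, 1}"
  shows "push x (k, j) \<in> arrows N"
proof -
  obtain s ws where x_eq: "x = (s, ws)" by (cases x)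
  from x[unfolded x_eq] show ?thesis
  proof (cases rule: arrows_snoc_cases)
    case empty
    then show ?thesis using j k by (simp add: x_eq push_Nil snoc_in_arrows_iff[of s "[]", simplified])
  next
    case (snoc bw k0 t0)
    show ?thesis
    proof (cases "k0 = k")
      case True
      then show ?thesis using snoc j k by (auto simp: x_eq push_snoc snoc_in_arrows_iff)
    next
      case False
      have "(s, (bw @ [(k0, t0)]) @ [(k, j)]) \<in> arrows N"
        using x j k False x_eq snoc by (subst snoc_in_arrows_iff) auto
      then show ?thesis using False snoc x_eq by (simp add: push_snoc)
    qed
  qed
qed

lemma push_push_tgt:
  assumes x: "x \<in> arrows N" and j: "j \<noteq> tgt x"
  shows "push (push x (k, j)) (k, tgt x) = x"
proof -
  obtain s ws where x_eq: "x = (s, ws)" by (cases x)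
  from x[unfolded x_eq] show ?thesis
  proof (cases rule: arrows_snoc_cases)
    case empty
    then show ?thesis using j by (simp add: x_eq push_Nil push_snoc[of s "[]", simplified])
  next
    case (snoc bw k0 t0)
    show ?thesis
    proof (cases "k0 = k")
      case same_label: True
      show ?thesis
      proof (cases "tgt (s, bw) = j")
        case True
        have "push (s, bw) (k, t0) = (s, bw @ [(k, t0)])"
        proof (cases bw rule: rev_cases)
          case Nil
          then show ?thesis by (simp add: push_Nil)
        next
          case bw_snoc: (snoc cw l)
          then show ?thesis using snoc same_label by (cases l) (auto simp: push_snoc)
        qed
        then show ?thesis using snoc same_label True by (simp add: x_eq push_snoc)
      next
        case False
        then show ?thesis using snoc same_label by (simp add: x_eq push_snoc)
      qed
    next
      case False
      then have "push x (k, j) = (s, (bw @ [(k0, t0)]) @ [(k, j)])"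
        using snoc x_eq by (simp add: push_snoc)
      then show ?thesis using snoc x_eq by (simp only: push_snoc) simp
    qed
  qed
qed

text \<open>Appending a letter whose label differs from the last one never reduces.\<close>

definition free_label :: "arrow \<Rightarrow> int" where
  "free_label x = (if snd x = [] then 1 else - fst (last (snd x)))"

definition extend :: "arrow \<Rightarrow> nat \<Rightarrow> arrow" where
  "extend x j = (fst x, snd x @ [(free_label x, j)])"

lemma free_label_in_arrows:
  assumes "x \<in> arrows N"
  shows "free_label x \<in> {-1, 1}" and "snd x \<noteq> [] \<Longrightarrow> fst (last (snd x)) \<noteq> free_label x"
proof -
  obtain s ws where x_eq: "x = (s, ws)" by (cases x)
  from assms[unfolded x_eq]
  show "free_label x \<in> {-1, 1}" and "snd x \<noteq> [] \<Longrightarrow> fst (last (snd x)) \<noteq> free_label x"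
    by (cases rule: arrows_snoc_cases; auto simp: free_label_def x_eq)+
qed

lemma tgt_extend [simp]: "tgt (extend x j) = j"
  by (cases x) (simp add: extend_def)

lemma length_extend [simp]: "length (snd (extend x j)) = Suc (length (snd x))"
  by (simp add: extend_def)

lemma extend_in_arrows: "x \<in> arrows N \<Longrightarrow> j \<in> {1..N} \<Longrightarrow> j \<noteq> tgt x \<Longrightarrow> extend x j \<in> arrows N"
  using free_label_in_arrows[of x N] by (cases x) (auto simp: extend_def snoc_in_arrows_iff)

lemma push_free_label: "x \<in> arrows N \<Longrightarrow> push x (free_label x, j) = extend x j"
  using free_label_in_arrows(2)[of x N] by (cases x) (auto simp: extend_def push_def)

lemma push_extend: "j' \<noteq> tgt x \<Longrightarrow> push (extend x j) (free_label x, j') = extend x j'"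
  by (cases x) (simp add: extend_def push_snoc)

lemma extend_eq_extend_iff: "extend x j = extend x' j' \<longleftrightarrow> x = x' \<and> j = j'"
  by (cases x; cases x') (auto simp: extend_def)

lemma extend_neq: "extend x j \<noteq> x"
  using length_extend[of x j] by (metis n_not_Suc_n)

definition other1 :: "nat \<Rightarrow> nat" where
  "other1 t = (if t = 1 then 2 else 1)"

definition other2 :: "nat \<Rightarrow> nat" where
  "other2 t = (if t = 3 then 2 else 3)"

lemma other_objects:
  "N \<ge> 3 \<Longrightarrow> t \<in> {1..N} \<Longrightarrow>
    other1 t \<in> {1..N} \<and> other2 t \<in> {1..N} \<and> other1 t \<noteq> t \<and> other2 t \<noteq> t \<and> other1 t \<noteq> other2 t"
  by (auto simp: other1_def other2_def)

definition short_arrows :: "nat \<Rightarrow> nat \<Rightarrow> arrow set" where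
  "short_arrows N M = {w \<in> arrows N. length (snd w) \<le> M}"

lemma finite_short_arrows: "finite (short_arrows N M)"
proof (rule finite_subset)
  show "short_arrows N M \<subseteq> {1..N} \<times> {ws. set ws \<subseteq> {-1, 1} \<times> {1..N} \<and> length ws \<le> M}"
    by (auto simp: short_arrows_def arrows_def)
  show "finite ({1..N} \<times> {ws. set ws \<subseteq> {-1, 1::int} \<times> {1..N} \<and> length ws \<le> M})"
    by (intro finite_cartesian_product finite_lists_length_le) auto
qed

lemma short_arrows_subset: "short_arrows N M \<subseteq> arrows N"
  by (auto simp: short_arrows_def)

lemma short_arrows_mono: "M \<le> M' \<Longrightarrow> short_arrows N M \<subseteq> short_arrows N M'"
  by (auto simp: short_arrows_def)

section \<open>Inequalities for finite sums and power series\<close>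

definition cauchy_schwarz_gap :: "'a set \<Rightarrow> ('a \<Rightarrow> real) \<Rightarrow> ('a \<Rightarrow> real) \<Rightarrow> real" where
  "cauchy_schwarz_gap A w h = (\<Sum>z\<in>A. w z) * (\<Sum>z\<in>A. w z * h z ^ 2) - (\<Sum>z\<in>A. w z * h z) ^ 2"

lemma cauchy_schwarz_gap_eq_double_sum:
  assumes "finite A"
  shows "cauchy_schwarz_gap A w h = (1/2) * (\<Sum>z\<in>A. \<Sum>z'\<in>A. w z * w z' * (h z - h z') ^ 2)"
proof -
  have "(\<Sum>z\<in>A. \<Sum>z'\<in>A. w z * w z' * (h z - h z') ^ 2)
      = (\<Sum>z\<in>A. \<Sum>z'\<in>A. (w z * h z ^ 2) * w z' - (2 * (w z * h z)) * (w z' * h z')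
          + w z * (w z' * h z' ^ 2))"
    by (intro sum.cong refl) (simp add: power2_eq_square algebra_simps)
  also have "\<dots> = (\<Sum>z\<in>A. w z * h z ^ 2) * (\<Sum>z\<in>A. w z)
      - (\<Sum>z\<in>A. 2 * (w z * h z)) * (\<Sum>z\<in>A. w z * h z) + (\<Sum>z\<in>A. w z) * (\<Sum>z\<in>A. w z * h z ^ 2)"
    by (simp add: sum.distrib sum_subtractf sum_product)
  also have "\<dots> = 2 * cauchy_schwarz_gap A w h"
  proof -
    have "(\<Sum>z\<in>A. 2 * (w z * h z)) = 2 * (\<Sum>z\<in>A. w z * h z)"
      by (simp add: sum_distrib_left)
    then show ?thesis by (simp add: cauchy_schwarz_gap_def power2_eq_square algebra_simps)
  qed
  finally show ?thesis by simp
qed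

lemma cauchy_schwarz_gap_nonneg:
  assumes "finite A" "\<And>z. z \<in> A \<Longrightarrow> 0 \<le> w z"
  shows "0 \<le> cauchy_schwarz_gap A w h"
  unfolding cauchy_schwarz_gap_eq_double_sum[OF assms(1)] using assms(2)
  by (auto intro!: sum_nonneg mult_nonneg_nonneg)

lemma cauchy_schwarz_gap_ge_pair:
  assumes A: "finite A" and w: "\<And>z. z \<in> A \<Longrightarrow> 0 \<le> w z"
    and z: "z1 \<in> A" "z2 \<in> A" "z1 \<noteq> z2"
  shows "w z1 * w z2 * (h z1 - h z2) ^ 2 \<le> cauchy_schwarz_gap A w h"
proof -
  define F where "F = (\<lambda>(z, z'). w z * w z' * (h z - h z') ^ 2)"
  have "2 * (w z1 * w z2 * (h z1 - h z2) ^ 2) = (\<Sum>x\<in>{(z1, z2), (z2, z1)}. F x)"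
    using z by (simp add: F_def power2_commute)
  also have "\<dots> \<le> (\<Sum>x\<in>A \<times> A. F x)"
    using z w A by (intro sum_mono2) (auto simp: F_def)
  also have "\<dots> = (\<Sum>z\<in>A. \<Sum>z'\<in>A. w z * w z' * (h z - h z') ^ 2)"
    unfolding F_def by (simp add: sum.cartesian_product)
  finally show ?thesis unfolding cauchy_schwarz_gap_eq_double_sum[OF A] by simp
qed

lemma sum_two_images_le:
  fixes F :: "'a \<Rightarrow> real"
  assumes "finite B" "inj_on f A" "inj_on g A" "f ` A \<inter> g ` A = {}" "f ` A \<union> g ` A \<subseteq> B"
    and "\<And>y. y \<in> B \<Longrightarrow> 0 \<le> F y"
  shows "(\<Sum>v\<in>A. F (f v) + F (g v)) \<le> (\<Sum>y\<in>B. F y)"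
proof -
  have "finite (f ` A)" using assms(1,5) finite_subset by blast
  then have "finite A" using assms(2) finite_imageD by blast
  then have "(\<Sum>v\<in>A. F (f v) + F (g v)) = (\<Sum>y\<in>f ` A \<union> g ` A. F y)"
    using assms(2-4) by (simp add: sum.distrib sum.union_disjoint sum.reindex)
  also have "\<dots> \<le> (\<Sum>y\<in>B. F y)"
    using assms(1,5,6) by (intro sum_mono2) auto
  finally show ?thesis .
qed

text \<open>A discrete isoperimetric inequality: as f ` A and g ` A are disjoint and h vanishes off A,
  the squares of h \<circ> f and h \<circ> g together have mass at most that of h, so h cannot be close
  to both of them.\<close>

lemma sum_sq_le_increments_along_two_images:
  fixes h :: "'a \<Rightarrow> real"
  assumes "finite B" "inj_on f A" "inj_on g A" "f ` A \<inter> g ` A = {}" "f ` A \<union> g ` A \<subseteq> B"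
    and "A \<subseteq> B" "\<And>y. y \<in> B - A \<Longrightarrow> h y = 0"
  shows "(\<Sum>v\<in>A. h v ^ 2) \<le> 6 * (\<Sum>v\<in>A. (h (f v) - h v) ^ 2 + (h (g v) - h v) ^ 2)"
proof -
  have sq: "b ^ 2 \<le> 3 * (a - b) ^ 2 + 3/2 * a ^ 2" for a b :: real
  proof -
    have "0 \<le> 2 * (b - 3/2 * a) ^ 2" by simp
    then show ?thesis by (simp add: power2_eq_square algebra_simps)
  qed
  have "(\<Sum>y\<in>B. h y ^ 2) = (\<Sum>v\<in>A. h v ^ 2)"
    using assms(1,6,7) by (intro sum.mono_neutral_right) auto
  then have images: "(\<Sum>v\<in>A. h (f v) ^ 2 + h (g v) ^ 2) \<le> (\<Sum>v\<in>A. h v ^ 2)"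
    using sum_two_images_le[OF assms(1-5), of "\<lambda>y. h y ^ 2"] by simp
  have "2 * (\<Sum>v\<in>A. h v ^ 2) \<le> (\<Sum>v\<in>A. 3 * ((h (f v) - h v) ^ 2 + (h (g v) - h v) ^ 2)
      + 3/2 * (h (f v) ^ 2 + h (g v) ^ 2))"
    unfolding sum_distrib_left
  proof (intro sum_mono)
    fix v
    show "2 * h v ^ 2 \<le> 3 * ((h (f v) - h v) ^ 2 + (h (g v) - h v) ^ 2)
        + 3/2 * (h (f v) ^ 2 + h (g v) ^ 2)"
      using sq[of "h v" "h (f v)"] sq[of "h v" "h (g v)"] unfolding distrib_left by linarith
  qed
  also have "\<dots> = 3 * (\<Sum>v\<in>A. (h (f v) - h v) ^ 2 + (h (g v) - h v) ^ 2)
      + 3/2 * (\<Sum>v\<in>A. h (f v) ^ 2 + h (g v) ^ 2)"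
    by (simp only: sum_distrib_left flip: sum.distrib)
  finally show ?thesis using images by simp
qed

lemma conv_radius_gt_1_if_geometric_bound:
  fixes f :: "nat \<Rightarrow> real"
  assumes r: "0 < r" "r < 1" and bound: "\<And>n. \<bar>f n\<bar> \<le> C * r ^ n"
  shows "1 < conv_radius f"
proof -
  have "ereal 1 < ereal (1 / r)" using r by simp
  also have "\<dots> \<le> conv_radius f"
  proof (rule conv_radius_geI_ex')
    fix \<rho> :: real
    assume \<rho>: "0 < \<rho>" "ereal \<rho> < ereal (1 / r)"
    then have "r * \<rho> < 1" using r by (simp add: field_simps)
    then have "summable (\<lambda>n. C * (r * \<rho>) ^ n)"
      using r \<rho> by (intro summable_mult summable_geometric) auto
    moreover have "norm (f n * of_real \<rho> ^ n) \<le> C * (r * \<rho>) ^ n" for n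
      using mult_right_mono[OF bound[of n], of "\<rho> ^ n"] \<rho>
      by (simp add: abs_mult power_abs power_mult_distrib mult.assoc)
    ultimately show "summable (\<lambda>n. f n * of_real \<rho> ^ n)"
      by (rule summable_comparison_test'[where N = 0])
  qed
  finally show ?thesis by (simp add: one_ereal_def)
qed

section \<open>The transition kernel\<close>

locale groupoid_walk =
  fixes N :: nat and p :: "nat \<Rightarrow> nat \<Rightarrow> int \<Rightarrow> real"
  assumes N_ge_3: "N \<ge> 3"
    and p_pos: "\<And>i j k. i \<in> {1..N} \<Longrightarrow> j \<in> {1..N} \<Longrightarrow> i \<noteq> j \<Longrightarrow> k \<in> {-1, 1} \<Longrightarrow> 0 < p i j k"
    and p_sum: "\<And>i. i \<in> {1..N} \<Longrightarrow> (\<Sum>j\<in>{1..N} - {i}. \<Sum>k\<in>{-1, 1::int}. p i j k) = 1"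
begin

abbreviation T :: "arrow \<Rightarrow> arrow \<Rightarrow> real" where
  "T \<equiv> trans_prob N p"

lemma p_nonneg: "i \<in> {1..N} \<Longrightarrow> j \<in> {1..N} \<Longrightarrow> i \<noteq> j \<Longrightarrow> k \<in> {-1, 1} \<Longrightarrow> 0 \<le> p i j k"
  using p_pos less_imp_le by blast

lemma trans_prob_eq:
  "T z y = (\<Sum>j\<in>{1..N} - {tgt z}. \<Sum>k\<in>{-1, 1::int}.
              p (tgt z) j k * (if y = push z (k, j) then 1 else 0))"
  unfolding trans_prob_def mult_def gen_def by (intro sum.cong refl) auto

lemma trans_prob_nonneg: "z \<in> arrows N \<Longrightarrow> 0 \<le> T z y"
  unfolding trans_prob_eq using tgt_in_arrows[of z N] p_nonneg
  by (intro sum_nonneg) (auto intro!: mult_nonneg_nonneg)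

definition successors :: "arrow \<Rightarrow> arrow set" where
  "successors z = (\<lambda>(j, k). push z (k, j)) ` (({1..N} - {tgt z}) \<times> {-1, 1})"

lemma finite_successors: "finite (successors z)"
  by (simp add: successors_def)

lemma push_in_successors: "j \<in> {1..N} - {tgt z} \<Longrightarrow> k \<in> {-1, 1} \<Longrightarrow> push z (k, j) \<in> successors z"
  unfolding successors_def by (rule image_eqI[where x = "(j, k)"]) auto

lemma trans_prob_eq_0:
  assumes "y \<notin> successors z"
  shows "T z y = 0"
proof -
  have "y \<noteq> push z (k, j)" if "j \<in> {1..N} - {tgt z}" "k \<in> {-1, 1}" for j k
    using assms push_in_successors[OF that] by blast
  then show ?thesis unfolding trans_prob_eq by (intro sum.neutral ballI) simp
qed

lemma successors_subset_short_arrows: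
  "z \<in> arrows N \<Longrightarrow> successors z \<subseteq> short_arrows N (Suc (length (snd z)))"
  unfolding successors_def short_arrows_def using length_push_le[of z]
  by (auto intro!: push_in_arrows)

lemma sum_trans_prob:
  assumes z: "z \<in> arrows N" and A: "finite A" "successors z \<subseteq> A"
  shows "(\<Sum>y\<in>A. T z y) = 1"
proof -
  have "(\<Sum>y\<in>A. T z y) = (\<Sum>j\<in>{1..N} - {tgt z}. \<Sum>k\<in>{-1, 1::int}.
          \<Sum>y\<in>A. p (tgt z) j k * (if y = push z (k, j) then 1 else 0))"
    unfolding trans_prob_eq by (subst sum.swap, rule sum.cong, simp, subst sum.swap) auto
  also have "\<dots> = (\<Sum>j\<in>{1..N} - {tgt z}. \<Sum>k\<in>{-1, 1::int}. p (tgt z) j k)"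
  proof (intro sum.cong refl)
    fix j k
    assume "j \<in> {1..N} - {tgt z}" "k \<in> {-1, 1::int}"
    then have "push z (k, j) \<in> A" using A push_in_successors by blast
    then show "(\<Sum>y\<in>A. p (tgt z) j k * (if y = push z (k, j) then 1 else 0)) = p (tgt z) j k"
      using A(1) by (simp add: sum_distrib_left[symmetric] sum.delta')
  qed
  also have "\<dots> = 1" using p_sum tgt_in_arrows[OF z] by simp
  finally show ?thesis .
qed

lemma p_le_trans_prob_push:
  assumes "tgt z \<in> {1..N}" "j \<in> {1..N}" "j \<noteq> tgt z" "k \<in> {-1, 1}"
  shows "p (tgt z) j k \<le> T z (push z (k, j))"
proof -
  define f where "f j' k' = p (tgt z) j' k' * (if push z (k, j) = push z (k', j') then 1 else 0)"
    for j' k'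
  have f_nonneg: "j' \<in> {1..N} - {tgt z} \<Longrightarrow> k' \<in> {-1, 1} \<Longrightarrow> 0 \<le> f j' k'" for j' k'
    using assms p_nonneg unfolding f_def by auto
  have "p (tgt z) j k = f j k" by (simp add: f_def)
  also have "\<dots> \<le> (\<Sum>k'\<in>{-1, 1::int}. f j k')"
    using assms f_nonneg by (intro member_le_sum) auto
  also have "\<dots> \<le> (\<Sum>j'\<in>{1..N} - {tgt z}. \<Sum>k'\<in>{-1, 1::int}. f j' k')"
    using assms f_nonneg
    by (intro member_le_sum[where f = "\<lambda>j'. \<Sum>k'\<in>{-1, 1::int}. f j' k'"] sum_nonneg) auto
  also have "\<dots> = T z (push z (k, j))" unfolding trans_prob_eq f_def by simp
  finally show ?thesis .
qed

lemma trans_prob_eq_sum_labels: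
  "T z y = (if tgt y \<in> {1..N} - {tgt z}
            then \<Sum>k\<in>{-1, 1::int}. p (tgt z) (tgt y) k * (if y = push z (k, tgt y) then 1 else 0)
            else 0)"
proof -
  have "T z y = (\<Sum>j\<in>{1..N} - {tgt z}. if j = tgt y
      then \<Sum>k\<in>{-1, 1::int}. p (tgt z) (tgt y) k * (if y = push z (k, tgt y) then 1 else 0)
      else 0)"
    unfolding trans_prob_eq by (intro sum.cong refl) (auto intro!: sum.neutral)
  then show ?thesis by (simp add: sum.delta)
qed

text \<open>By \<open>push_push_tgt\<close> the step \<open>z \<rightarrow> y\<close> can be reversed: each arrow has at most
  one predecessor per object and label.\<close>

lemma weighted_trans_prob_le_reverse:
  assumes z: "z \<in> arrows N" and y: "tgt y \<in> {1..N}" and a: "\<And>t. t \<in> {1..N} \<Longrightarrow> 0 \<le> a t"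
  shows "a (tgt z) * T z y \<le> (\<Sum>t\<in>{1..N} - {tgt y}. \<Sum>k\<in>{-1, 1::int}.
            a t * p t (tgt y) k * (if z = push y (k, t) then 1 else 0))"
    (is "_ \<le> (\<Sum>t\<in>_. ?R t)")
proof -
  have tz: "tgt z \<in> {1..N}" using tgt_in_arrows[OF z] .
  have R_nonneg: "t \<in> {1..N} - {tgt y} \<Longrightarrow> 0 \<le> ?R t" for t
    using a y p_nonneg by (intro sum_nonneg) auto
  show ?thesis
  proof (cases "tgt y \<in> {1..N} - {tgt z}")
    case False
    have "T z y = 0" by (simp only: trans_prob_eq_sum_labels[of z y] if_not_P[OF False])
    moreover have "0 \<le> (\<Sum>t\<in>{1..N} - {tgt y}. ?R t)" using R_nonneg by (rule sum_nonneg)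
    ultimately show ?thesis by simp
  next
    case True
    have "T z y = (\<Sum>k\<in>{-1, 1::int}. p (tgt z) (tgt y) k * (if y = push z (k, tgt y) then 1 else 0))"
      by (simp only: trans_prob_eq_sum_labels[of z y] if_P[OF True])
    then have "a (tgt z) * T z y = (\<Sum>k\<in>{-1, 1::int}.
        a (tgt z) * p (tgt z) (tgt y) k * (if y = push z (k, tgt y) then 1 else 0))"
      by (simp only: sum_distrib_left mult.assoc)
    also have "\<dots> \<le> ?R (tgt z)"
    proof (intro sum_mono)
      fix k :: int
      assume k: "k \<in> {-1, 1}"
      have "y = push z (k, tgt y) \<Longrightarrow> z = push y (k, tgt z)"
        using push_push_tgt[OF z, of "tgt y" k] True by auto
      then show "a (tgt z) * p (tgt z) (tgt y) k * (if y = push z (k, tgt y) then 1 else 0)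
          \<le> a (tgt z) * p (tgt z) (tgt y) k * (if z = push y (k, tgt z) then 1 else 0)"
        using a[OF tz] p_nonneg[of "tgt z" "tgt y" k] True k tz by auto
    qed
    also have "\<dots> \<le> (\<Sum>t\<in>{1..N} - {tgt y}. ?R t)"
      using True tz R_nonneg by (intro member_le_sum) auto
    finally show ?thesis .
  qed
qed

definition obj_trans :: "nat \<Rightarrow> nat \<Rightarrow> real" where
  "obj_trans t j = (\<Sum>k\<in>{-1, 1::int}. p t j k)"

lemma sum_weighted_trans_prob_le:
  assumes Z: "finite Z" "Z \<subseteq> arrows N" and y: "tgt y \<in> {1..N}"
    and a: "\<And>t. t \<in> {1..N} \<Longrightarrow> 0 \<le> a t"
  shows "(\<Sum>z\<in>Z. a (tgt z) * T z y) \<le> (\<Sum>t\<in>{1..N} - {tgt y}. a t * obj_trans t (tgt y))"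
proof -
  have "(\<Sum>z\<in>Z. a (tgt z) * T z y) \<le> (\<Sum>z\<in>Z. \<Sum>t\<in>{1..N} - {tgt y}. \<Sum>k\<in>{-1, 1::int}.
      a t * p t (tgt y) k * (if z = push y (k, t) then 1 else 0))"
    using Z y a by (intro sum_mono weighted_trans_prob_le_reverse) auto
  also have "\<dots> = (\<Sum>t\<in>{1..N} - {tgt y}. \<Sum>k\<in>{-1, 1::int}.
      a t * p t (tgt y) k * (\<Sum>z\<in>Z. if z = push y (k, t) then 1 else 0))"
    by (subst sum.swap, rule sum.cong, simp, subst sum.swap) (auto simp: sum_distrib_left)
  also have "\<dots> \<le> (\<Sum>t\<in>{1..N} - {tgt y}. \<Sum>k\<in>{-1, 1::int}. a t * p t (tgt y) k)"
  proof (intro sum_mono)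
    fix t k
    assume "t \<in> {1..N} - {tgt y}" "k \<in> {-1, 1::int}"
    then have "0 \<le> a t * p t (tgt y) k" using a y p_nonneg by auto
    moreover have "(\<Sum>z\<in>Z. if z = push y (k, t) then 1 else 0) \<le> (1::real)"
      using Z by (simp add: sum.delta')
    ultimately show "a t * p t (tgt y) k * (\<Sum>z\<in>Z. if z = push y (k, t) then 1 else 0)
        \<le> a t * p t (tgt y) k"
      by (simp add: mult_left_le)
  qed
  also have "\<dots> = (\<Sum>t\<in>{1..N} - {tgt y}. a t * obj_trans t (tgt y))"
    by (simp only: obj_trans_def sum_distrib_left)
  finally show ?thesis .
qed

lemma nn_integral_trans_prob:
  assumes z: "z \<in> arrows N"
  shows "(\<integral>\<^sup>+ y. ennreal (T z y) \<partial>count_space UNIV) = 1"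
proof -
  have "(\<integral>\<^sup>+ y. ennreal (T z y) \<partial>count_space UNIV) = (\<Sum>y\<in>successors z. ennreal (T z y))"
    using trans_prob_eq_0 by (intro nn_integral_count_space' finite_successors) auto
  also have "\<dots> = ennreal (\<Sum>y\<in>successors z. T z y)"
    using trans_prob_nonneg[OF z] by simp
  also have "\<dots> = 1"
    using sum_trans_prob[OF z finite_successors] by simp
  finally show ?thesis .
qed

lemma pmf_kernel: "z \<in> arrows N \<Longrightarrow> pmf (kernel N p z) y = T z y"
  unfolding kernel_def using trans_prob_nonneg nn_integral_trans_prob by (subst pmf_embed_pmf) auto

lemma set_pmf_kernel: "z \<in> arrows N \<Longrightarrow> set_pmf (kernel N p z) = {y. T z y \<noteq> 0}"
  unfolding kernel_def using trans_prob_nonneg nn_integral_trans_prob by (subst set_embed_pmf) auto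

section \<open>The object chain\<close>

definition p_values :: "real set" where
  "p_values = (\<lambda>(i, j, k). p i j k) `
     {(i, j, k). i \<in> {1..N} \<and> j \<in> {1..N} \<and> i \<noteq> j \<and> k \<in> {-1, 1::int}}"

definition \<delta> :: real where
  "\<delta> = min (1/2) (Min p_values)"

lemma finite_p_values: "finite p_values"
proof -
  have "{(i, j, k). i \<in> {1..N} \<and> j \<in> {1..N} \<and> i \<noteq> j \<and> k \<in> {-1, 1::int}}
      \<subseteq> {1..N} \<times> {1..N} \<times> {-1, 1}"
    by auto
  then show ?thesis unfolding p_values_def by (intro finite_imageI) (rule finite_subset, auto)
qed

lemma delta_pos: "0 < \<delta>"
proof -
  have "(1, 2, 1) \<in> {(i, j, k). i \<in> {1..N} \<and> j \<in> {1..N} \<and> i \<noteq> j \<and> k \<in> {-1, 1::int}}"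
    using N_ge_3 by auto
  then have "p_values \<noteq> {}" unfolding p_values_def by blast
  moreover have "\<forall>x\<in>p_values. 0 < x" unfolding p_values_def using p_pos by auto
  ultimately show ?thesis unfolding \<delta>_def using finite_p_values by simp
qed

lemma delta_le_half: "\<delta> \<le> 1/2"
  unfolding \<delta>_def by simp

lemma delta_le_p: "i \<in> {1..N} \<Longrightarrow> j \<in> {1..N} \<Longrightarrow> i \<noteq> j \<Longrightarrow> k \<in> {-1, 1} \<Longrightarrow> \<delta> \<le> p i j k"
proof -
  assume "i \<in> {1..N}" "j \<in> {1..N}" "i \<noteq> j" "k \<in> {-1, 1}"
  then have "p i j k \<in> p_values" unfolding p_values_def by (intro image_eqI[where x = "(i, j, k)"]) auto
  then show ?thesis unfolding \<delta>_def using finite_p_values by (simp add: min.coboundedI2)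
qed

lemma delta_le_obj_trans: "t \<in> {1..N} \<Longrightarrow> j \<in> {1..N} \<Longrightarrow> t \<noteq> j \<Longrightarrow> \<delta> \<le> obj_trans t j"
  unfolding obj_trans_def using delta_le_p[of t j 1] p_nonneg[of t j "-1"] by simp

lemma obj_trans_nonneg: "t \<in> {1..N} \<Longrightarrow> j \<in> {1..N} \<Longrightarrow> t \<noteq> j \<Longrightarrow> 0 \<le> obj_trans t j"
  using delta_le_obj_trans delta_pos by force

lemma sum_obj_trans: "t \<in> {1..N} \<Longrightarrow> (\<Sum>j\<in>{1..N} - {t}. obj_trans t j) = 1"
  unfolding obj_trans_def using p_sum by simp

text \<open>Here \<open>N \<ge> 3\<close> is needed: some third object receives mass at least \<open>\<delta>\<close>.\<close>

lemma obj_trans_le: assumes "t \<in> {1..N}" "j \<in> {1..N}" "t \<noteq> j" shows "obj_trans t j \<le> 1 - \<delta>"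
proof -
  obtain j' where j': "j' \<in> {1..N}" "j' \<noteq> t" "j' \<noteq> j"
    using other_objects[OF N_ge_3 assms(1)] by (cases "other1 t = j") (auto simp del: One_nat_def)
  have "obj_trans t j + obj_trans t j' = (\<Sum>i\<in>{j, j'}. obj_trans t i)" using j' by simp
  also have "\<dots> \<le> (\<Sum>i\<in>{1..N} - {t}. obj_trans t i)"
    using assms j' obj_trans_nonneg by (intro sum_mono2) auto
  also have "\<dots> = 1" using sum_obj_trans assms by simp
  finally show ?thesis using delta_le_obj_trans[of t j'] j' assms by simp
qed

text \<open>The weights 1 Q^n of the object chain; they dominate the flow into each arrow
  (see \<open>sum_weighted_trans_prob_le\<close>).\<close>

fun obj_weight :: "nat \<Rightarrow> nat \<Rightarrow> real" where
  "obj_weight 0 t = 1"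
| "obj_weight (Suc n) j = (\<Sum>t\<in>{1..N} - {j}. obj_weight n t * obj_trans t j)"

lemma obj_weight_nonneg: "j \<in> {1..N} \<Longrightarrow> 0 \<le> obj_weight n j"
  by (induction n arbitrary: j) (auto intro!: sum_nonneg mult_nonneg_nonneg obj_trans_nonneg)

lemma sum_obj_weight: "(\<Sum>j\<in>{1..N}. obj_weight n j) = N"
proof (induction n)
  case 0
  then show ?case by simp
next
  case (Suc n)
  have "(\<Sum>j\<in>{1..N}. obj_weight (Suc n) j)
      = (\<Sum>j\<in>{1..N}. \<Sum>t\<in>{t\<in>{1..N}. t \<noteq> j}. obj_weight n t * obj_trans t j)"
    by (intro sum.cong refl) (simp add: set_diff_eq Collect_conj_eq[symmetric] conj_commute)
  also have "\<dots> = (\<Sum>t\<in>{1..N}. \<Sum>j\<in>{j\<in>{1..N}. t \<noteq> j}. obj_weight n t * obj_trans t j)"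
    by (rule sum.swap_restrict) auto
  also have "\<dots> = (\<Sum>t\<in>{1..N}. obj_weight n t * (\<Sum>j\<in>{1..N} - {t}. obj_trans t j))"
    by (intro sum.cong refl) (auto simp: sum_distrib_left intro!: sum.cong)
  also have "\<dots> = (\<Sum>t\<in>{1..N}. obj_weight n t)" using sum_obj_trans by simp
  finally show ?case using Suc by simp
qed

lemma obj_weight_le: "j \<in> {1..N} \<Longrightarrow> obj_weight n j \<le> N"
  using member_le_sum[of j "{1..N}" "obj_weight n"] obj_weight_nonneg sum_obj_weight by simp

lemma obj_weight_le_fraction: assumes j: "j \<in> {1..N}" shows "obj_weight n j \<le> (1 - \<delta>) * N"
proof (cases n)
  case 0
  have "1 \<le> (1/2) * real N" using N_ge_3 by simp
  also have "\<dots> \<le> (1 - \<delta>) * N" using delta_le_half by (intro mult_right_mono) auto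
  finally show ?thesis using 0 by simp
next
  case (Suc m)
  have "obj_weight n j \<le> (\<Sum>t\<in>{1..N} - {j}. obj_weight m t * (1 - \<delta>))"
    unfolding Suc using obj_trans_le obj_weight_nonneg j by (auto intro!: sum_mono mult_left_mono)
  also have "\<dots> = (1 - \<delta>) * (\<Sum>t\<in>{1..N} - {j}. obj_weight m t)"
    by (simp add: sum_distrib_left mult.commute)
  also have "\<dots> \<le> (1 - \<delta>) * (\<Sum>t\<in>{1..N}. obj_weight m t)"
    using delta_le_half obj_weight_nonneg by (intro mult_left_mono sum_mono2) auto
  finally show ?thesis using sum_obj_weight by simp
qed

lemma delta_sq_le_obj_weight: assumes j: "j \<in> {1..N}" shows "\<delta>\<^sup>2 \<le> obj_weight n j"
proof (cases n)
  case 0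
  have "\<delta> \<le> 1" using delta_le_half by simp
  then show ?thesis using 0 delta_pos by (simp add: power_le_one)
next
  case (Suc m)
  have "\<delta> * (\<delta> * N) \<le> \<delta> * (N - obj_weight m j)"
    using obj_weight_le_fraction[OF j, of m] delta_pos by (intro mult_left_mono) (auto simp: algebra_simps)
  also have "\<dots> = \<delta> * (\<Sum>t\<in>{1..N} - {j}. obj_weight m t)"
    using sum_obj_weight[of m] j by (simp add: sum_diff1)
  also have "\<dots> = (\<Sum>t\<in>{1..N} - {j}. obj_weight m t * \<delta>)"
    by (simp add: sum_distrib_left mult.commute)
  also have "\<dots> \<le> obj_weight n j"
    unfolding Suc using delta_le_obj_trans obj_weight_nonneg j by (auto intro!: sum_mono mult_left_mono)
  finally have "\<delta> * (\<delta> * N) \<le> obj_weight n j" .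
  moreover have "\<delta> * (\<delta> * 1) \<le> \<delta> * (\<delta> * N)" using N_ge_3 delta_pos by (intro mult_left_mono) auto
  ultimately show ?thesis by (simp add: power2_eq_square)
qed

section \<open>Branching\<close>

lemma delta_le_trans_prob_extend:
  assumes v: "v \<in> arrows N" and j: "j \<in> {1..N}" "j \<noteq> tgt v"
  shows "\<delta> \<le> T v (extend v j)"
proof -
  have "\<delta> \<le> p (tgt v) j (free_label v)"
    using delta_le_p tgt_in_arrows[OF v] free_label_in_arrows(1)[OF v] j by auto
  also have "\<dots> \<le> T v (push v (free_label v, j))"
    using p_le_trans_prob_push tgt_in_arrows[OF v] free_label_in_arrows(1)[OF v] j by auto
  finally show ?thesis by (simp add: push_free_label[OF v])
qed

text \<open>The relation A_{t,j}^(k) A_{j,j'}^(k) = A_{t,j'}^(k) links two extensions of v by a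
  single step.\<close>

lemma delta_le_trans_prob_extend_extend:
  assumes v: "v \<in> arrows N" and j: "j \<in> {1..N}" "j \<noteq> tgt v" and j': "j' \<in> {1..N}" "j' \<noteq> tgt v"
    and "j \<noteq> j'"
  shows "\<delta> \<le> T (extend v j) (extend v j')"
proof -
  have "\<delta> \<le> p j j' (free_label v)"
    using delta_le_p free_label_in_arrows(1)[OF v] assms by auto
  also have "\<dots> \<le> T (extend v j) (push (extend v j) (free_label v, j'))"
    using p_le_trans_prob_push[of "extend v j" j' "free_label v"] free_label_in_arrows(1)[OF v] assms
    by auto
  finally show ?thesis by (simp add: push_extend j')
qed

definition child1 :: "arrow \<Rightarrow> arrow" where
  "child1 v = extend v (other1 (tgt v))"

definition child2 :: "arrow \<Rightarrow> arrow" where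
  "child2 v = extend v (other2 (tgt v))"

lemma children_short_arrows:
  "child1 ` short_arrows N M \<union> child2 ` short_arrows N M \<subseteq> short_arrows N (Suc M)"
  using other_objects[OF N_ge_3 tgt_in_arrows]
  by (auto simp: short_arrows_def child1_def child2_def intro!: extend_in_arrows)

lemma inj_on_child1: "inj_on child1 A"
  by (auto simp: inj_on_def child1_def extend_eq_extend_iff)

lemma inj_on_child2: "inj_on child2 A"
  by (auto simp: inj_on_def child2_def extend_eq_extend_iff)

lemma disjoint_children: "A \<subseteq> arrows N \<Longrightarrow> child1 ` A \<inter> child2 ` A = {}"
  using other_objects[OF N_ge_3 tgt_in_arrows]
  by (fastforce simp: child1_def child2_def extend_eq_extend_iff)

end

section \<open>The law of the walk\<close>

locale groupoid_walk_from = groupoid_walk +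
  fixes x0 :: arrow
  assumes x0_in_arrows: "x0 \<in> arrows N"
begin

definition law :: "nat \<Rightarrow> arrow pmf" where
  "law n = map_pmf (\<lambda>w. w ! n) (path_pmf N p x0 n)"

abbreviation u :: "nat \<Rightarrow> arrow \<Rightarrow> real" where
  "u n z \<equiv> pmf (law n) z"

abbreviation reach :: "nat \<Rightarrow> arrow set" where
  "reach n \<equiv> short_arrows N (n + length (snd x0))"

lemma length_path: "w \<in> set_pmf (path_pmf N p x0 n) \<Longrightarrow> length w = Suc n"
  by (induction n arbitrary: w) auto

lemma law_0: "law 0 = return_pmf x0"
  unfolding law_def by simp

lemma law_Suc: "law (Suc n) = bind_pmf (law n) (kernel N p)"
proof -
  have "law (Suc n) = bind_pmf (path_pmf N p x0 n)
      (\<lambda>w. map_pmf (\<lambda>z. (w @ [z]) ! Suc n) (kernel N p (last w)))"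
    unfolding law_def by (simp add: map_bind_pmf map_pmf_comp)
  also have "\<dots> = bind_pmf (path_pmf N p x0 n) (\<lambda>w. kernel N p (w ! n))"
  proof (rule bind_pmf_cong[OF refl])
    fix w
    assume "w \<in> set_pmf (path_pmf N p x0 n)"
    then have len: "length w = Suc n" by (rule length_path)
    then have "last w = w ! n" by (cases w rule: rev_cases) (auto simp: nth_append)
    moreover have "(\<lambda>z. (w @ [z]) ! Suc n) = (\<lambda>z. z)" using len by (auto simp: nth_append)
    ultimately show "map_pmf (\<lambda>z. (w @ [z]) ! Suc n) (kernel N p (last w)) = kernel N p (w ! n)"
      by simp
  qed
  also have "\<dots> = bind_pmf (law n) (kernel N p)" unfolding law_def by (simp add: bind_map_pmf)
  finally show ?thesis .
qed

lemma set_pmf_law: "set_pmf (law n) \<subseteq> reach n"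
proof (induction n)
  case 0
  then show ?case using x0_in_arrows by (simp add: law_0 short_arrows_def)
next
  case (Suc n)
  show ?case
  proof
    fix y
    assume "y \<in> set_pmf (law (Suc n))"
    then obtain z where z: "z \<in> reach n" and y: "y \<in> set_pmf (kernel N p z)"
      using Suc by (auto simp: law_Suc)
    then have "z \<in> arrows N" using short_arrows_subset by blast
    then have "y \<in> successors z" using y trans_prob_eq_0[of y z] by (auto simp: set_pmf_kernel)
    then show "y \<in> reach (Suc n)"
      using successors_subset_short_arrows[of z] z by (auto simp: short_arrows_def)
  qed
qed

lemma pmf_law_eq_0: "z \<notin> reach n \<Longrightarrow> u n z = 0"
  using set_pmf_law[of n] by (auto simp: pmf_eq_0_set_pmf)

lemma pmf_law_Suc:
  assumes "n + length (snd x0) \<le> M"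
  shows "u (Suc n) y = (\<Sum>z\<in>short_arrows N M. u n z * T z y)"
proof -
  have "set_pmf (law n) \<subseteq> short_arrows N M"
    using set_pmf_law[of n] short_arrows_mono[OF assms] by blast
  then have "u (Suc n) y = (\<Sum>z\<in>short_arrows N M. u n z *\<^sub>R pmf (kernel N p z) y)"
    unfolding law_Suc pmf_bind by (intro integral_measure_pmf finite_short_arrows) auto
  also have "\<dots> = (\<Sum>z\<in>short_arrows N M. u n z * T z y)"
    by (intro sum.cong refl) (auto simp: short_arrows_def pmf_kernel)
  finally show ?thesis .
qed

lemma prob_at_eq_pmf_law: "prob_at N p x0 y n = u n y"
  unfolding prob_at_def law_def pmf_map by (simp add: vimage_def)

lemma prob_hit_le_prob_at: "prob_hit N p x0 y n \<le> prob_at N p x0 y n"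
  unfolding prob_hit_def prob_at_def by (intro measure_pmf.finite_measure_mono) auto

section \<open>Decay of the energy\<close>

definition weight :: "nat \<Rightarrow> arrow \<Rightarrow> real" where
  "weight n z = obj_weight n (tgt z)"

definition ratio :: "nat \<Rightarrow> arrow \<Rightarrow> real" where
  "ratio n z = u n z / weight n z"

definition energy :: "nat \<Rightarrow> real" where
  "energy n = (\<Sum>z\<in>reach n. weight n z * ratio n z ^ 2)"

definition flow :: "nat \<Rightarrow> arrow \<Rightarrow> arrow \<Rightarrow> real" where
  "flow n y z = weight n z * T z y"

definition defect :: "nat \<Rightarrow> arrow \<Rightarrow> real" where
  "defect n y = cauchy_schwarz_gap (reach (Suc n)) (flow n y) (ratio n)"

lemma weight_bounds:
  assumes "z \<in> arrows N"
  shows "\<delta>\<^sup>2 \<le> weight n z" "weight n z \<le> N" "0 < weight n z"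
  using delta_sq_le_obj_weight obj_weight_le tgt_in_arrows[OF assms] delta_pos
  by (auto simp: weight_def intro: less_le_trans[OF zero_less_power])

lemma ratio_eq_0: "z \<notin> reach n \<Longrightarrow> ratio n z = 0"
  by (simp add: ratio_def pmf_law_eq_0)

lemma weight_ratio_sq_nonneg:
  assumes "z \<in> short_arrows N M"
  shows "0 \<le> weight n z * ratio n z ^ 2"
proof -
  have "0 < weight n z" using assms weight_bounds(3)[of z n] by (simp add: short_arrows_def)
  then show ?thesis by simp
qed

lemma flow_nonneg: "z \<in> arrows N \<Longrightarrow> 0 \<le> flow n y z"
  unfolding flow_def using weight_bounds(3)[of z n] trans_prob_nonneg[of z y] by simp

lemma delta_cube_le_flow:
  assumes "z \<in> arrows N" "\<delta> \<le> T z y"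
  shows "\<delta> ^ 3 \<le> flow n y z"
proof -
  have "\<delta>\<^sup>2 * \<delta> \<le> weight n z * T z y"
    using weight_bounds[OF assms(1), of n] assms(2) delta_pos by (intro mult_mono) auto
  then show ?thesis by (simp add: flow_def power_numeral_reduce)
qed

lemma defect_nonneg: "0 \<le> defect n y"
  unfolding defect_def using short_arrows_subset
  by (intro cauchy_schwarz_gap_nonneg finite_short_arrows flow_nonneg) auto

lemma sum_flow_le_weight:
  assumes "y \<in> arrows N"
  shows "(\<Sum>z\<in>reach (Suc n). flow n y z) \<le> weight (Suc n) y"
  using sum_weighted_trans_prob_le[OF finite_short_arrows short_arrows_subset tgt_in_arrows[OF assms],
      of "obj_weight n"] obj_weight_nonneg
  by (simp add: flow_def weight_def obj_trans_def)

lemma sum_flow_ratio: "(\<Sum>z\<in>reach (Suc n). flow n y z * ratio n z) = u (Suc n) y"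
proof -
  have "(\<Sum>z\<in>reach (Suc n). flow n y z * ratio n z) = (\<Sum>z\<in>reach (Suc n). u n z * T z y)"
  proof (intro sum.cong refl)
    fix z
    assume "z \<in> reach (Suc n)"
    then have "weight n z \<noteq> 0" using weight_bounds(3)[of z n] by (auto simp: short_arrows_def)
    then show "flow n y z * ratio n z = u n z * T z y" by (simp add: flow_def ratio_def)
  qed
  also have "\<dots> = u (Suc n) y" by (rule pmf_law_Suc[symmetric]) simp
  finally show ?thesis .
qed

lemma sum_sum_flow_ratio_sq:
  "(\<Sum>y\<in>reach (Suc n). \<Sum>z\<in>reach (Suc n). flow n y z * ratio n z ^ 2) = energy n"
proof -
  have "(\<Sum>y\<in>reach (Suc n). \<Sum>z\<in>reach (Suc n). flow n y z * ratio n z ^ 2)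
      = (\<Sum>z\<in>reach (Suc n). weight n z * ratio n z ^ 2 * (\<Sum>y\<in>reach (Suc n). T z y))"
    by (subst sum.swap) (simp add: flow_def sum_distrib_left mult_ac)
  also have "\<dots> = (\<Sum>z\<in>reach (Suc n). weight n z * ratio n z ^ 2)"
  proof (intro sum.cong refl)
    fix z
    assume "z \<in> reach (Suc n)"
    show "weight n z * ratio n z ^ 2 * (\<Sum>y\<in>reach (Suc n). T z y) = weight n z * ratio n z ^ 2"
    proof (cases "z \<in> reach n")
      case True
      then have "z \<in> arrows N" and "successors z \<subseteq> reach (Suc n)"
        using successors_subset_short_arrows[of z] by (auto simp: short_arrows_def)
      then show ?thesis using sum_trans_prob finite_short_arrows by simp
    qed (simp add: ratio_eq_0)
  qed
  also have "\<dots> = energy n"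
    unfolding energy_def
    by (intro sum.mono_neutral_right finite_short_arrows short_arrows_mono) (auto simp: ratio_eq_0)
  finally show ?thesis .
qed

text \<open>Cauchy--Schwarz: defect n y is the gap in
  u_{n+1}(y)^2 \<le> (\<Sum> flow) (\<Sum> flow ratio^2), and \<Sum> flow \<le> weight.\<close>

lemma energy_Suc_le_defect:
  "energy (Suc n) \<le> energy n - (\<Sum>y\<in>reach (Suc n). defect n y) / N"
proof -
  define C where "C y = (\<Sum>z\<in>reach (Suc n). flow n y z * ratio n z ^ 2)" for y
  have pointwise: "weight (Suc n) y * ratio (Suc n) y ^ 2 \<le> C y - defect n y / N"
    if "y \<in> reach (Suc n)" for y
  proof -
    have y: "y \<in> arrows N" using that short_arrows_subset by blast
    define b where "b = weight (Suc n) y"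
    have b: "0 < b" "b \<le> N" using weight_bounds[OF y] by (auto simp: b_def)
    have "0 \<le> C y"
      unfolding C_def using short_arrows_subset
      by (intro sum_nonneg mult_nonneg_nonneg flow_nonneg) auto
    have "u (Suc n) y ^ 2 = (\<Sum>z\<in>reach (Suc n). flow n y z) * C y - defect n y"
      unfolding defect_def cauchy_schwarz_gap_def sum_flow_ratio C_def by simp
    also have "\<dots> \<le> b * C y - defect n y"
      using sum_flow_le_weight[OF y, of n] \<open>0 \<le> C y\<close> by (simp add: b_def mult_right_mono)
    finally have "u (Suc n) y ^ 2 \<le> b * C y - defect n y" .
    then have "weight (Suc n) y * ratio (Suc n) y ^ 2 \<le> C y - defect n y / b"
      using b by (simp add: ratio_def b_def power2_eq_square field_simps)
    moreover have "defect n y / N \<le> defect n y / b"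
      using b defect_nonneg by (simp add: frac_le)
    ultimately show ?thesis by simp
  qed
  have "energy (Suc n) \<le> (\<Sum>y\<in>reach (Suc n). C y - defect n y / N)"
    unfolding energy_def using pointwise by (intro sum_mono) simp
  also have "\<dots> = energy n - (\<Sum>y\<in>reach (Suc n). defect n y) / N"
    unfolding sum_subtractf C_def sum_sum_flow_ratio_sq by (simp add: sum_divide_distrib)
  finally show ?thesis .
qed

lemma ratio_extend_le_defect:
  assumes v: "v \<in> reach n" and j: "j \<in> {1..N}" "j \<noteq> tgt v" and j': "j' \<in> {1..N}" "j' \<noteq> tgt v"
    and "j \<noteq> j'"
  shows "\<delta> ^ 6 * (ratio n (extend v j) - ratio n v) ^ 2 \<le> defect n (extend v j')"
proof -
  have v_arr: "v \<in> arrows N" using v short_arrows_subset by blast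
  have in_reach: "v \<in> reach (Suc n)" "extend v j \<in> reach (Suc n)"
    using v extend_in_arrows[OF v_arr j] by (auto simp: short_arrows_def)
  have flow1: "\<delta> ^ 3 \<le> flow n (extend v j') (extend v j)"
    using delta_cube_le_flow extend_in_arrows[OF v_arr j]
      delta_le_trans_prob_extend_extend[OF v_arr j j' \<open>j \<noteq> j'\<close>] by blast
  have flow2: "\<delta> ^ 3 \<le> flow n (extend v j') v"
    using delta_cube_le_flow v_arr delta_le_trans_prob_extend[OF v_arr j'] by blast
  have "0 \<le> \<delta> ^ 3" using delta_pos by simp
  then have "\<delta> ^ 6 \<le> flow n (extend v j') (extend v j) * flow n (extend v j') v"
    using mult_mono[OF flow1 flow2 order_trans[OF _ flow1]] by (simp flip: power_add)
  then have "\<delta> ^ 6 * (ratio n (extend v j) - ratio n v) ^ 2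
      \<le> flow n (extend v j') (extend v j) * flow n (extend v j') v * (ratio n (extend v j) - ratio n v) ^ 2"
    by (rule mult_right_mono) simp
  also have "\<dots> \<le> defect n (extend v j')"
    unfolding defect_def using in_reach extend_neq
    by (intro cauchy_schwarz_gap_ge_pair finite_short_arrows flow_nonneg) (auto simp: short_arrows_def)
  finally show ?thesis .
qed

lemma ratio_children_le_defect:
  assumes "v \<in> reach n"
  shows "\<delta> ^ 6 * ((ratio n (child1 v) - ratio n v) ^ 2 + (ratio n (child2 v) - ratio n v) ^ 2)
    \<le> defect n (child1 v) + defect n (child2 v)"
proof -
  have "tgt v \<in> {1..N}" using assms short_arrows_subset tgt_in_arrows by blast
  note others = other_objects[OF N_ge_3 this]
  have "\<delta> ^ 6 * (ratio n (child1 v) - ratio n v) ^ 2 \<le> defect n (child2 v)"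
    unfolding child1_def child2_def using assms others by (intro ratio_extend_le_defect) auto
  moreover have "\<delta> ^ 6 * (ratio n (child2 v) - ratio n v) ^ 2 \<le> defect n (child1 v)"
    unfolding child1_def child2_def using assms others by (intro ratio_extend_le_defect) auto
  ultimately show ?thesis unfolding distrib_left by linarith
qed

lemma energy_le_sum_ratio_sq: "energy n \<le> N * (\<Sum>v\<in>reach n. ratio n v ^ 2)"
  unfolding energy_def sum_distrib_left
proof (intro sum_mono mult_right_mono)
  fix v
  assume "v \<in> reach n"
  then show "weight n v \<le> N" using weight_bounds(2) short_arrows_subset by blast
qed simp

text \<open>\<delta>^6 bounds a product of two flows, 6 is the constant of the isoperimetric inequality, and
  N^2 comes from the two uses of weight \<le> N.\<close>

definition \<kappa> :: real where
  "\<kappa> = \<delta> ^ 6 / (6 * N\<^sup>2)"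

lemma kappa_pos: "0 < \<kappa>"
  unfolding \<kappa>_def using delta_pos N_ge_3 by simp

lemma kappa_lt_1: "\<kappa> < 1"
proof -
  have "\<delta> ^ 6 \<le> 1" using delta_pos delta_le_half by (simp add: power_le_one)
  moreover have "1 \<le> real N ^ 2" using N_ge_3 by (simp add: one_le_power)
  ultimately show ?thesis unfolding \<kappa>_def by (simp add: divide_less_eq)
qed

lemma energy_Suc_le: "energy (Suc n) \<le> (1 - \<kappa>) * energy n"
proof -
  define X where "X = (\<Sum>v\<in>reach n. ratio n v ^ 2)"
  define D where "D = (\<Sum>v\<in>reach n. (ratio n (child1 v) - ratio n v) ^ 2
                                    + (ratio n (child2 v) - ratio n v) ^ 2)"
  have N_pos: "(0::real) < N" using N_ge_3 by simp
  have children: "child1 ` reach n \<union> child2 ` reach n \<subseteq> reach (Suc n)"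
    using children_short_arrows[of "n + length (snd x0)"] by simp
  have "\<delta> ^ 6 * D \<le> (\<Sum>v\<in>reach n. defect n (child1 v) + defect n (child2 v))"
    unfolding D_def sum_distrib_left using ratio_children_le_defect by (intro sum_mono) auto
  also have "\<dots> \<le> (\<Sum>y\<in>reach (Suc n). defect n y)"
    using children defect_nonneg disjoint_children[OF short_arrows_subset]
    by (intro sum_two_images_le finite_short_arrows inj_on_child1 inj_on_child2)
  finally have D_le: "\<delta> ^ 6 * D / N \<le> (\<Sum>y\<in>reach (Suc n). defect n y) / N"
    using N_pos by (simp add: divide_right_mono)
  have X_le: "X \<le> 6 * D"
    unfolding X_def D_def
    using finite_short_arrows inj_on_child1 inj_on_child2 disjoint_children[OF short_arrows_subset]
      children short_arrows_mono ratio_eq_0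
    by (intro sum_sq_le_increments_along_two_images[where B = "reach (Suc n)"]) auto
  have "\<kappa> * energy n \<le> \<kappa> * (N * X)"
    using energy_le_sum_ratio_sq kappa_pos unfolding X_def by (simp add: mult_left_mono)
  also have "\<dots> \<le> \<kappa> * (N * (6 * D))"
    using X_le kappa_pos N_pos by (intro mult_left_mono) auto
  also have "\<dots> = \<delta> ^ 6 * D / N"
    using N_pos by (simp add: \<kappa>_def power2_eq_square)
  finally have "\<kappa> * energy n \<le> (\<Sum>y\<in>reach (Suc n). defect n y) / N"
    using D_le by linarith
  then show ?thesis
    using energy_Suc_le_defect[of n] by (simp add: left_diff_distrib)
qed

lemma energy_0: "energy 0 = 1"
proof -
  have "energy 0 = (\<Sum>z\<in>reach 0. if z = x0 then 1 else 0)"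
    unfolding energy_def by (intro sum.cong refl) (auto simp: law_0 weight_def ratio_def indicator_def)
  also have "\<dots> = 1" using x0_in_arrows finite_short_arrows by (simp add: sum.delta' short_arrows_def)
  finally show ?thesis .
qed

lemma energy_le_power: "energy n \<le> (1 - \<kappa>) ^ n"
proof (induction n)
  case 0
  then show ?case by (simp add: energy_0)
next
  case (Suc n)
  have "energy (Suc n) \<le> (1 - \<kappa>) * energy n" by (rule energy_Suc_le)
  also have "\<dots> \<le> (1 - \<kappa>) * (1 - \<kappa>) ^ n" using Suc kappa_lt_1 by (intro mult_left_mono) auto
  finally show ?case by simp
qed

lemma pmf_law_sq_le: "u n y ^ 2 \<le> N * (1 - \<kappa>) ^ n"
proof (cases "y \<in> reach n")
  case True
  then have y: "y \<in> arrows N" using short_arrows_subset by blast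
  have "u n y ^ 2 = weight n y * (weight n y * ratio n y ^ 2)"
    using weight_bounds(3)[OF y, of n] by (simp add: ratio_def power2_eq_square field_simps)
  also have "\<dots> \<le> N * energy n"
    unfolding energy_def using True weight_bounds[OF y, of n]
    by (intro mult_mono member_le_sum finite_short_arrows weight_ratio_sq_nonneg) auto
  also have "\<dots> \<le> N * (1 - \<kappa>) ^ n" using energy_le_power by (simp add: mult_left_mono)
  finally show ?thesis .
next
  case False
  then show ?thesis using kappa_lt_1 by (simp add: pmf_law_eq_0)
qed

lemma prob_at_bound: "\<bar>prob_at N p x0 y n\<bar> \<le> sqrt N * sqrt (1 - \<kappa>) ^ n"
proof -
  have "\<bar>prob_at N p x0 y n\<bar> = sqrt (u n y ^ 2)" by (simp add: prob_at_eq_pmf_law)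
  also have "\<dots> \<le> sqrt (N * (1 - \<kappa>) ^ n)" using pmf_law_sq_le by (rule real_sqrt_le_mono)
  also have "\<dots> = sqrt N * sqrt (1 - \<kappa>) ^ n" by (simp add: real_sqrt_mult real_sqrt_power)
  finally show ?thesis .
qed

lemma prob_hit_bound: "\<bar>prob_hit N p x0 y n\<bar> \<le> sqrt N * sqrt (1 - \<kappa>) ^ n"
proof -
  have "0 \<le> prob_hit N p x0 y n" unfolding prob_hit_def by simp
  then have "\<bar>prob_hit N p x0 y n\<bar> \<le> \<bar>prob_at N p x0 y n\<bar>" using prob_hit_le_prob_at[of y n] by linarith
  then show ?thesis using prob_at_bound by (rule order_trans)
qed

end

theorem proposition5p7:
  fixes N :: nat and p :: "nat \<Rightarrow> nat \<Rightarrow> int \<Rightarrow> real"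
  assumes "N \<ge> 3"
    and "\<And>i j k. i \<in> {1..N} \<Longrightarrow> j \<in> {1..N} \<Longrightarrow> i \<noteq> j \<Longrightarrow> k \<in> {-1, 1}
           \<Longrightarrow> 0 < p i j k \<and> p i j k < 1"
    and "\<And>i. i \<in> {1..N} \<Longrightarrow> (\<Sum>j\<in>{1..N} - {i}. \<Sum>k\<in>{-1, 1::int}. p i j k) = 1"
    and "x \<in> arrows N" and "y \<in> arrows N"
  shows "conv_radius (prob_at N p x y) > 1 \<and> conv_radius (prob_hit N p x y) > 1"
proof -
  interpret groupoid_walk_from N p x
    using assms by unfold_locales auto
  have r: "0 < sqrt (1 - \<kappa>)" "sqrt (1 - \<kappa>) < 1" using kappa_pos kappa_lt_1 by auto
  show ?thesis
    using conv_radius_gt_1_if_geometric_bound[OF r prob_at_bound[of y]]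
      conv_radius_gt_1_if_geometric_bound[OF r prob_hit_bound[of y]]
    by blast
qed

end
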